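(* Let $G$ be a $k$-regular graph with $k\ge 43$ and let $C$ be a Hamiltonian cycle of $G$. Then there exists a set $S\subseteq V(G)$ such that (1) no two vertices adjacent on $C$ both lie in $S$, and (2) every vertex $v$ of $G$ either lies in $S$ or is joined to some vertex $w\in S$ by an edge of $G$ not in $C$. *)

theory Defs
  imports Main
begin

definition simple_graph :: "'a set \<Rightarrow> ('a \<Rightarrow> 'a \<Rightarrow> bool) \<Rightarrow> bool" where
  "simple_graph V E \<longleftrightarrow> finite V \<and> (\<forall>u v. E u v \<longrightarrow> u \<in> V \<and> v \<in> V)
     \<and> (\<forall>u v. E u v \<longrightarrow> E v u) \<and> (\<forall>v. \<not> E v v)"

definition neighbours :: "'a set \<Rightarrow> ('a \<Rightarrow> 'a \<Rightarrow> bool) \<Rightarrow> 'a \<Rightarrow> 'a set" where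
  "neighbours V E v = {u \<in> V. E v u}"

definition regular :: "'a set \<Rightarrow> ('a \<Rightarrow> 'a \<Rightarrow> bool) \<Rightarrow> nat \<Rightarrow> bool" where
  "regular V E k \<longleftrightarrow> (\<forall>v\<in>V. card (neighbours V E v) = k)"

definition ham_cycle :: "'a set \<Rightarrow> ('a \<Rightarrow> 'a \<Rightarrow> bool) \<Rightarrow> 'a list \<Rightarrow> bool" where
  "ham_cycle V E C \<longleftrightarrow> distinct C \<and> set C = V \<and> length C \<ge> 3
     \<and> (\<forall>i < length C. E (C ! i) (C ! ((i + 1) mod length C)))"

definition cycle_adj :: "'a list \<Rightarrow> 'a \<Rightarrow> 'a \<Rightarrow> bool" where
  "cycle_adj C u v \<longleftrightarrow> (\<exists>i < length C.
     (u = C ! i \<and> v = C ! ((i + 1) mod length C)) \<or>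
     (v = C ! i \<and> u = C ! ((i + 1) mod length C)))"

end

theory Submission
  imports Defs Complex_Main "HOL-Library.FuncSet"
begin

text \<open>Colour the positions of the Hamiltonian cycle independently and uniformly with two colours and
  let S be the set of vertices that start a run, i.e. carry colour 1 while their predecessor on C
  carries colour 0. Two consecutive vertices never both start a run, so S is independent on C.
  Every vertex v has at least k - 2 neighbours off the cycle; fixing k - 1 vertices of its closed
  chord neighbourhood, the probability that none of them starts a run is at most (3/4)^(k-1). This
  event depends only on the colours of these vertices and of their predecessors, hence shares
  coordinates with at most 4(k+1)^2 other such events, and the symmetric local lemma (4 p D \<le> 1)
  applies for k \<ge> 43. Probabilities are replaced by counting colourings throughout.\<close>

definition determined_by :: "'i set \<Rightarrow> ('i \<Rightarrow> 'b) set \<Rightarrow> ('i \<Rightarrow> 'b) set \<Rightarrow> bool" where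
  "determined_by B \<Omega> A \<longleftrightarrow> (\<forall>f\<in>\<Omega>. \<forall>g\<in>\<Omega>. (\<forall>i\<in>B. f i = g i) \<longrightarrow> f \<in> A \<longrightarrow> g \<in> A)"

lemma determined_by_mono: "B \<subseteq> B' \<Longrightarrow> determined_by B \<Omega> A \<Longrightarrow> determined_by B' \<Omega> A"
  unfolding determined_by_def by blast

lemma card_Int_mult_card_PiE:
  assumes "A \<subseteq> Pi\<^sub>E I X" and "W \<subseteq> Pi\<^sub>E I X"
    and "determined_by B (Pi\<^sub>E I X) A" and "determined_by (- B) (Pi\<^sub>E I X) W"
  shows "card (A \<inter> W) * card (Pi\<^sub>E I X) = card A * card W"
proof -
  define mix where "mix f g = (\<lambda>i. if i \<in> B then f i else g i)" for f g :: "'a \<Rightarrow> 'b"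
  define swap where "swap = (\<lambda>(f, g). (mix f g, mix g f))"
  have mix_PiE: "mix f g \<in> Pi\<^sub>E I X" if "f \<in> Pi\<^sub>E I X" "g \<in> Pi\<^sub>E I X" for f g
    using that unfolding mix_def by (auto simp: PiE_iff extensional_def)
  have mix_A: "mix f g \<in> A" if "f \<in> A" "g \<in> Pi\<^sub>E I X" for f g
    using assms(1,3) that mix_PiE unfolding determined_by_def by (auto simp: mix_def)
  have mix_W: "mix g f \<in> W" if "f \<in> W" "g \<in> Pi\<^sub>E I X" for f g
    using assms(2,4) that mix_PiE unfolding determined_by_def by (auto simp: mix_def)
  \<comment> \<open>Exchanging the coordinates in B is an involution matching (A \<inter> W) \<times> \<Omega> with A \<times> W.\<close>
  have "bij_betw swap ((A \<inter> W) \<times> Pi\<^sub>E I X) (A \<times> W)"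
  proof (rule bij_betw_byWitness[where f' = swap])
    show "\<forall>x\<in>(A \<inter> W) \<times> Pi\<^sub>E I X. swap (swap x) = x"
         "\<forall>x\<in>A \<times> W. swap (swap x) = x"
      by (auto simp: swap_def mix_def fun_eq_iff)
    show "swap ` ((A \<inter> W) \<times> Pi\<^sub>E I X) \<subseteq> A \<times> W"
      using mix_A mix_W by (auto simp: swap_def)
    show "swap ` (A \<times> W) \<subseteq> (A \<inter> W) \<times> Pi\<^sub>E I X"
    proof
      fix x assume "x \<in> swap ` (A \<times> W)"
      then obtain f g where f: "f \<in> A" and g: "g \<in> W" and x: "x = (mix f g, mix g f)"
        by (auto simp: swap_def)
      have "f \<in> Pi\<^sub>E I X" "g \<in> Pi\<^sub>E I X"
        using f g assms(1,2) by auto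
      then show "x \<in> (A \<inter> W) \<times> Pi\<^sub>E I X"
        using x mix_A[OF f] mix_W[OF g] mix_PiE by simp
    qed
  qed
  then have "card ((A \<inter> W) \<times> Pi\<^sub>E I X) = card (A \<times> W)"
    by (rule bij_betw_same_card)
  then show ?thesis by (simp add: card_cartesian_product)
qed

definition avoiding :: "('i \<Rightarrow> 'b) set \<Rightarrow> ('j \<Rightarrow> ('i \<Rightarrow> 'b) set) \<Rightarrow> 'j set \<Rightarrow> ('i \<Rightarrow> 'b) set" where
  "avoiding \<Omega> A Z = {f \<in> \<Omega>. \<forall>j\<in>Z. f \<notin> A j}"

lemma determined_by_avoiding:
  assumes "\<forall>j\<in>Z. determined_by (B j) \<Omega> (A j)"
  shows "determined_by (\<Union>j\<in>Z. B j) \<Omega> (avoiding \<Omega> A Z)"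
  unfolding determined_by_def
proof (intro ballI impI)
  fix f g assume f: "f \<in> \<Omega>" and g: "g \<in> \<Omega>" and agree: "\<forall>i\<in>\<Union>j\<in>Z. B j. f i = g i"
    and "f \<in> avoiding \<Omega> A Z"
  have "g \<notin> A j" if "j \<in> Z" for j
  proof
    assume "g \<in> A j"
    moreover have "\<forall>i\<in>B j. g i = f i"
      using agree that by auto
    ultimately have "f \<in> A j"
      using assms that f g unfolding determined_by_def by blast
    then show False
      using \<open>f \<in> avoiding \<Omega> A Z\<close> that unfolding avoiding_def by blast
  qed
  then show "g \<in> avoiding \<Omega> A Z"
    using g unfolding avoiding_def by blast
qed

lemma card_avoiding_le_card_avoiding_Un:
  assumes "finite \<Omega>" and "finite Z1"
  shows "card (avoiding \<Omega> A Z2)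
           \<le> card (avoiding \<Omega> A (Z1 \<union> Z2)) + (\<Sum>i\<in>Z1. card (A i \<inter> avoiding \<Omega> A Z2))"
proof -
  let ?U = "\<Union>i\<in>Z1. A i \<inter> avoiding \<Omega> A Z2"
  have "avoiding \<Omega> A Z2 \<subseteq> avoiding \<Omega> A (Z1 \<union> Z2) \<union> ?U"
    unfolding avoiding_def by blast
  moreover have "finite (avoiding \<Omega> A (Z1 \<union> Z2) \<union> ?U)"
    using assms(1) by (rule finite_subset[rotated]) (auto simp: avoiding_def)
  ultimately have "card (avoiding \<Omega> A Z2) \<le> card (avoiding \<Omega> A (Z1 \<union> Z2) \<union> ?U)"
    by (rule card_mono[rotated])
  also have "\<dots> \<le> card (avoiding \<Omega> A (Z1 \<union> Z2)) + card ?U"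
    by (rule card_Un_le)
  also have "card ?U \<le> (\<Sum>i\<in>Z1. card (A i \<inter> avoiding \<Omega> A Z2))"
    using assms(2) by (rule card_UN_le)
  finally show ?thesis by simp
qed

context
  fixes I :: "'i set" and X :: "'i \<Rightarrow> 'b set" and \<Omega> :: "('i \<Rightarrow> 'b) set"
    and J :: "'j set" and A :: "'j \<Rightarrow> ('i \<Rightarrow> 'b) set" and B :: "'j \<Rightarrow> 'i set"
    and p :: real and D :: nat
  assumes \<Omega>_eq: "\<Omega> = Pi\<^sub>E I X" and finite_\<Omega>: "finite \<Omega>" and \<Omega>_nonempty: "\<Omega> \<noteq> {}"
    and finite_J: "finite J"
    and events: "\<And>j. j \<in> J \<Longrightarrow> A j \<subseteq> \<Omega> \<and> determined_by (B j) \<Omega> (A j)"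
    and card_event: "\<And>j. j \<in> J \<Longrightarrow> card (A j) \<le> p * card \<Omega>"
    and dependency: "\<And>j. j \<in> J \<Longrightarrow> card {j'\<in>J. B j' \<inter> B j \<noteq> {}} \<le> D"
    and p_nonneg: "0 \<le> p" and four_p_D: "4 * p * D \<le> 1" and two_p: "2 * p < 1"
begin

lemma card_event_avoiding_independent:
  assumes "Z \<subseteq> J" and "j \<in> J" and "\<forall>i\<in>Z. B i \<inter> B j = {}"
  shows "card (A j \<inter> avoiding \<Omega> A Z) \<le> p * card (avoiding \<Omega> A Z)"
proof -
  have "determined_by (\<Union>i\<in>Z. B i) \<Omega> (avoiding \<Omega> A Z)"
    using assms(1) events by (intro determined_by_avoiding) blast
  then have "determined_by (- B j) \<Omega> (avoiding \<Omega> A Z)"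
    by (rule determined_by_mono[rotated]) (use assms(3) in blast)
  then have "card (A j \<inter> avoiding \<Omega> A Z) * card \<Omega> = card (A j) * card (avoiding \<Omega> A Z)"
    using events[OF assms(2)] unfolding \<Omega>_eq
    by (intro card_Int_mult_card_PiE) (auto simp: avoiding_def)
  then have "real (card (A j \<inter> avoiding \<Omega> A Z)) * card \<Omega>
      = real (card (A j)) * card (avoiding \<Omega> A Z)"
    by (metis of_nat_mult)
  also have "\<dots> \<le> p * card \<Omega> * card (avoiding \<Omega> A Z)"
    using card_event[OF assms(2)] by (rule mult_right_mono) simp
  finally have "card (A j \<inter> avoiding \<Omega> A Z) * card \<Omega> \<le> (p * card (avoiding \<Omega> A Z)) * card \<Omega>"
    by (simp add: algebra_simps)
  moreover have "0 < card \<Omega>"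
    using finite_\<Omega> \<Omega>_nonempty by (simp add: card_gt_0_iff)
  ultimately show ?thesis
    by simp
qed

lemma card_avoiding_le_twice:
  assumes "finite Z1" and "card Z1 \<le> D"
    and "\<And>i. i \<in> Z1 \<Longrightarrow> card (A i \<inter> avoiding \<Omega> A Z2) \<le> 2 * p * card (avoiding \<Omega> A Z2)"
  shows "card (avoiding \<Omega> A Z2) \<le> 2 * card (avoiding \<Omega> A (Z1 \<union> Z2))"
proof -
  have "(\<Sum>i\<in>Z1. real (card (A i \<inter> avoiding \<Omega> A Z2)))
      \<le> card Z1 * (2 * p * card (avoiding \<Omega> A Z2))"
    by (rule sum_bounded_above) (use assms(3) in simp)
  also have "\<dots> \<le> D * (2 * p * card (avoiding \<Omega> A Z2))"
    using assms(2) p_nonneg by (intro mult_right_mono) auto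
  also have "\<dots> \<le> 1/2 * card (avoiding \<Omega> A Z2)"
    using four_p_D mult_right_mono[of "D * (2 * p)" "1/2" "card (avoiding \<Omega> A Z2)"]
    by (simp add: algebra_simps)
  finally have sum_le: "(\<Sum>i\<in>Z1. real (card (A i \<inter> avoiding \<Omega> A Z2)))
      \<le> 1/2 * card (avoiding \<Omega> A Z2)" .
  have "card (avoiding \<Omega> A Z2)
      \<le> card (avoiding \<Omega> A (Z1 \<union> Z2)) + (\<Sum>i\<in>Z1. card (A i \<inter> avoiding \<Omega> A Z2))"
    using card_avoiding_le_card_avoiding_Un[OF finite_\<Omega> assms(1)] .
  then have "real (card (avoiding \<Omega> A Z2))
      \<le> card (avoiding \<Omega> A (Z1 \<union> Z2)) + (\<Sum>i\<in>Z1. real (card (A i \<inter> avoiding \<Omega> A Z2)))"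
    by (metis of_nat_add of_nat_le_iff of_nat_sum)
  then show ?thesis
    using sum_le by simp
qed

lemma card_event_avoiding_le:
  assumes "Z \<subseteq> J" and "j \<in> J"
  shows "card (A j \<inter> avoiding \<Omega> A Z) \<le> 2 * p * card (avoiding \<Omega> A Z)"
  using assms
proof (induction "card Z" arbitrary: Z j rule: less_induct)
  case less
  define Z1 where "Z1 = {i\<in>Z. B i \<inter> B j \<noteq> {}}"
  define Z2 where "Z2 = Z - Z1"
  have finite_Z: "finite Z"
    using less.prems finite_J finite_subset by blast
  have Z_eq: "Z = Z1 \<union> Z2"
    unfolding Z1_def Z2_def by blast
  have halving: "card (avoiding \<Omega> A Z2) \<le> 2 * card (avoiding \<Omega> A Z)"
  proof (cases "Z1 = {}")
    case True
    then show ?thesis using Z_eq by simp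
  next
    case False
    have "card Z2 < card Z"
      using False finite_Z by (intro psubset_card_mono) (auto simp: Z1_def Z2_def)
    then have IH: "card (A i \<inter> avoiding \<Omega> A Z2) \<le> 2 * p * card (avoiding \<Omega> A Z2)" if "i \<in> Z1" for i
      using less.hyps less.prems that by (auto simp: Z1_def Z2_def)
    have "card Z1 \<le> card {j'\<in>J. B j' \<inter> B j \<noteq> {}}"
      using less.prems finite_J by (intro card_mono) (auto simp: Z1_def)
    then have "card Z1 \<le> D"
      using dependency[OF less.prems(2)] by linarith
    moreover have "finite Z1"
      using finite_Z by (simp add: Z1_def)
    ultimately show ?thesis
      using card_avoiding_le_twice[of Z1 Z2] IH Z_eq by simp
  qed
  have "real (card (A j \<inter> avoiding \<Omega> A Z)) \<le> card (A j \<inter> avoiding \<Omega> A Z2)"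
    using finite_\<Omega> by (intro of_nat_mono card_mono) (auto simp: avoiding_def Z2_def)
  also have "\<dots> \<le> p * card (avoiding \<Omega> A Z2)"
    using less.prems by (intro card_event_avoiding_independent) (auto simp: Z1_def Z2_def)
  also have "\<dots> \<le> p * (2 * card (avoiding \<Omega> A Z))"
    using halving p_nonneg by (intro mult_left_mono) auto
  finally show ?case by simp
qed

lemma avoiding_nonempty:
  assumes "Z \<subseteq> J"
  shows "avoiding \<Omega> A Z \<noteq> {}"
proof -
  have "finite Z"
    using assms finite_J finite_subset by blast
  then show ?thesis
    using assms
  proof (induction Z rule: finite_induct)
    case empty
    then show ?case using \<Omega>_nonempty by (simp add: avoiding_def)
  next
    case (insert j Z)
    have finite_avoiding: "finite (avoiding \<Omega> A Z)"
      using finite_\<Omega> by (simp add: avoiding_def)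
    have "avoiding \<Omega> A (insert j Z) = avoiding \<Omega> A Z - A j \<inter> avoiding \<Omega> A Z"
      unfolding avoiding_def by blast
    then have "card (avoiding \<Omega> A (insert j Z))
        = card (avoiding \<Omega> A Z) - card (A j \<inter> avoiding \<Omega> A Z)"
      using finite_avoiding by (simp add: card_Diff_subset)
    moreover have "card (A j \<inter> avoiding \<Omega> A Z) \<le> card (avoiding \<Omega> A Z)"
      using finite_avoiding by (intro card_mono) auto
    ultimately have "real (card (avoiding \<Omega> A (insert j Z)))
        = card (avoiding \<Omega> A Z) - real (card (A j \<inter> avoiding \<Omega> A Z))"
      by (simp add: of_nat_diff)
    also have "\<dots> \<ge> (1 - 2 * p) * card (avoiding \<Omega> A Z)"
      using card_event_avoiding_le[of Z j] insert.prems by (simp add: algebra_simps)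
    moreover have "0 < (1 - 2 * p) * card (avoiding \<Omega> A Z)"
      using insert finite_avoiding two_p by (simp add: card_gt_0_iff)
    ultimately show ?case
      by fastforce
  qed
qed

theorem lovasz_local_lemma:
  "\<exists>f\<in>\<Omega>. \<forall>j\<in>J. f \<notin> A j"
  using avoiding_nonempty[of J] unfolding avoiding_def by blast

end

lemma card_flip_eq:
  fixes X :: "('i \<Rightarrow> bool) set"
  assumes "q \<noteq> i" and flip_closed: "\<And>f. f \<in> X \<Longrightarrow> f(i := \<not> f i) \<in> X"
  shows "card {f \<in> X. \<not> f q \<and> \<not> f i} = card {f \<in> X. \<not> f q \<and> f i}"
proof -
  define flip where "flip f = f(i := \<not> f i)" for f :: "'i \<Rightarrow> bool"
  have flip_flip: "flip (flip f) = f" for f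
    by (simp add: flip_def fun_eq_iff)
  have flip_X: "flip f \<in> X" if "f \<in> X" for f
    using flip_closed that by (simp only: flip_def)
  have flip_q: "flip f q = f q" and flip_i: "flip f i = (\<not> f i)" for f
    using assms(1) by (simp_all add: flip_def)
  have inj: "inj_on flip {f \<in> X. \<not> f q \<and> \<not> f i}"
    by (rule inj_on_inverseI[where g = flip]) (rule flip_flip)
  have image: "flip ` {f \<in> X. \<not> f q \<and> \<not> f i} = {f \<in> X. \<not> f q \<and> f i}"
  proof (rule equalityI)
    show "flip ` {f \<in> X. \<not> f q \<and> \<not> f i} \<subseteq> {f \<in> X. \<not> f q \<and> f i}"
      using flip_X flip_q flip_i by auto
    show "{f \<in> X. \<not> f q \<and> f i} \<subseteq> flip ` {f \<in> X. \<not> f q \<and> \<not> f i}"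
    proof
      fix f assume "f \<in> {f \<in> X. \<not> f q \<and> f i}"
      then have "flip f \<in> {f \<in> X. \<not> f q \<and> \<not> f i}"
        using flip_X flip_q flip_i by auto
      then show "f \<in> flip ` {f \<in> X. \<not> f q \<and> \<not> f i}"
        by (rule image_eqI[rotated]) (simp only: flip_flip)
    qed
  qed
  show ?thesis
    unfolding image[symmetric] by (rule card_image[OF inj, symmetric])
qed

lemma card_clear_le:
  fixes X :: "('i \<Rightarrow> bool) set"
  assumes "finite X" and clear_closed: "\<And>f. f \<in> X \<Longrightarrow> f(q := False) \<in> X"
  shows "card {f \<in> X. f q} \<le> card {f \<in> X. \<not> f q}"
proof (rule card_inj_on_le)
  show "inj_on (\<lambda>f. f(q := False)) {f \<in> X. f q}"
  proof (rule inj_onI)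
    fix f g assume "f \<in> {f \<in> X. f q}" "g \<in> {f \<in> X. f q}" "f(q := False) = g(q := False)"
    then have "(f(q := False))(q := True) = (g(q := False))(q := True)" and "f q" "g q"
      by auto
    then show "f = g"
      by (simp add: fun_eq_iff split: if_splits) metis
  qed
qed (use assms in auto)

lemma card_le_four_card_pattern:
  fixes X :: "('i \<Rightarrow> bool) set"
  assumes "finite X" and "q \<noteq> i"
    and flip_closed: "\<And>f. f \<in> X \<Longrightarrow> f(i := \<not> f i) \<in> X"
    and clear_closed: "\<And>f. f \<in> X \<Longrightarrow> f(q := False) \<in> X"
  shows "card X \<le> 4 * card {f \<in> X. \<not> f q \<and> f i}"
proof -
  have "X = {f \<in> X. f q} \<union> {f \<in> X. \<not> f q}" by blast
  then have split_q: "card X = card {f \<in> X. f q} + card {f \<in> X. \<not> f q}"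
    using assms(1) card_Un_disjoint[of "{f \<in> X. f q}" "{f \<in> X. \<not> f q}"] by auto
  have "{f \<in> X. \<not> f q} = {f \<in> X. \<not> f q \<and> \<not> f i} \<union> {f \<in> X. \<not> f q \<and> f i}" by blast
  then have split_i: "card {f \<in> X. \<not> f q} = card {f \<in> X. \<not> f q \<and> \<not> f i} + card {f \<in> X. \<not> f q \<and> f i}"
    using assms(1) card_Un_disjoint[of "{f \<in> X. \<not> f q \<and> \<not> f i}" "{f \<in> X. \<not> f q \<and> f i}"]
    by auto
  show ?thesis
    using split_q split_i card_clear_le[OF assms(1) clear_closed] card_flip_eq[OF assms(2) flip_closed]
    by linarith
qed

definition cyc_succ :: "nat \<Rightarrow> nat \<Rightarrow> nat" where
  "cyc_succ n i = (i + 1) mod n"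

definition cyc_pred :: "nat \<Rightarrow> nat \<Rightarrow> nat" where
  "cyc_pred n i = (i + n - 1) mod n"

lemma cyc_succ_less: "0 < n \<Longrightarrow> cyc_succ n i < n"
  by (simp add: cyc_succ_def)

lemma cyc_pred_less: "0 < n \<Longrightarrow> cyc_pred n i < n"
  by (simp add: cyc_pred_def)

lemma cyc_pred_eq: "i < n \<Longrightarrow> cyc_pred n i = (if i = 0 then n - 1 else i - 1)"
proof (cases "i = 0")
  case False
  assume "i < n"
  then have "i + n - 1 = (i - 1) + n"
    using False by simp
  moreover have "((i - 1) + n) mod n = i - 1"
    using \<open>i < n\<close> by simp
  ultimately show ?thesis
    using False by (simp add: cyc_pred_def)
qed (simp add: cyc_pred_def)

lemma cyc_succ_eq: "i < n \<Longrightarrow> cyc_succ n i = (if i + 1 = n then 0 else i + 1)"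
  by (auto simp: cyc_succ_def)

lemma cyc_pred_cyc_succ: "i < n \<Longrightarrow> cyc_pred n (cyc_succ n i) = i"
  by (auto simp: cyc_pred_eq cyc_succ_eq cyc_succ_less)

lemma cyc_succ_cyc_pred: "i < n \<Longrightarrow> cyc_succ n (cyc_pred n i) = i"
  by (auto simp: cyc_pred_eq cyc_succ_eq cyc_pred_less)

lemma cyc_pred_neq: "i < n \<Longrightarrow> 2 \<le> n \<Longrightarrow> cyc_pred n i \<noteq> i"
  by (auto simp: cyc_pred_eq)

lemma cyc_pred_ne:
  assumes "i < n" and "j < n" and "j \<noteq> i" and "j \<noteq> cyc_succ n i"
  shows "cyc_pred n j \<noteq> i" and "cyc_pred n j \<noteq> cyc_pred n i"
  using assms cyc_succ_cyc_pred[OF assms(1)] cyc_succ_cyc_pred[OF assms(2)] by metis+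

lemma exists_cyc_succ_notin:
  assumes "P \<subseteq> {0..<n}" and "P \<noteq> {}" and "card P < n"
  shows "\<exists>i\<in>P. cyc_succ n i \<notin> P"
proof (rule ccontr)
  assume "\<not> ?thesis"
  then have closed: "cyc_succ n i \<in> P" if "i \<in> P" for i
    using that by blast
  obtain i0 where "i0 \<in> P"
    using assms(2) by blast
  then have "i0 < n"
    using assms(1) by auto
  have iterate: "(i0 + j) mod n \<in> P" for j
  proof (induction j)
    case 0
    then show ?case using \<open>i0 \<in> P\<close> \<open>i0 < n\<close> by simp
  next
    case (Suc j)
    have "cyc_succ n ((i0 + j) mod n) = (i0 + Suc j) mod n"
      by (simp add: cyc_succ_def mod_Suc_eq)
    then show ?case
      using closed[OF Suc] by simp
  qed
  have "{0..<n} \<subseteq> P"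
  proof
    fix x assume "x \<in> {0..<n}"
    then have "x = (i0 + (n - i0 + x)) mod n"
      using \<open>i0 < n\<close> by simp
    then show "x \<in> P"
      using iterate by metis
  qed
  moreover have "finite P"
    using assms(1) finite_subset by blast
  ultimately have "card {0..<n} \<le> card P"
    by (rule card_mono[rotated])
  then show False
    using assms(3) by simp
qed

definition run_start :: "nat \<Rightarrow> (nat \<Rightarrow> bool) \<Rightarrow> nat \<Rightarrow> bool" where
  "run_start n f i \<longleftrightarrow> f i \<and> \<not> f (cyc_pred n i)"

lemma run_start_fun_upd:
  "j \<noteq> i \<Longrightarrow> j \<noteq> cyc_pred n i \<Longrightarrow> run_start n (f(j := b)) i = run_start n f i"
  by (simp add: run_start_def)

lemma not_run_start_cyc_succ:
  "i < n \<Longrightarrow> run_start n f i \<Longrightarrow> \<not> run_start n f (cyc_succ n i)"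
  by (simp add: run_start_def cyc_pred_cyc_succ)

lemma run_start_fun_upd_False:
  "j \<noteq> cyc_pred n i \<Longrightarrow> run_start n (f(j := False)) i \<Longrightarrow> run_start n f i"
  by (auto simp: run_start_def split: if_splits)

text \<open>Neither i nor q = cyc_pred n i is the predecessor of a position in Q, so flipping i and
  clearing q keep Q free of run starts; hence at least a quarter of these colourings start a run at i.\<close>
lemma four_card_no_run_start_insert:
  assumes "2 \<le> n" and "i < n" and "Q \<subseteq> {0..<n}" and "i \<notin> Q" and "cyc_succ n i \<notin> Q"
  shows "4 * card {f \<in> {0..<n} \<rightarrow>\<^sub>E UNIV. \<forall>j\<in>insert i Q. \<not> run_start n f j}
           \<le> 3 * card {f \<in> {0..<n} \<rightarrow>\<^sub>E UNIV. \<forall>j\<in>Q. \<not> run_start n f j}"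
proof -
  define X where "X = {f \<in> {0..<n} \<rightarrow>\<^sub>E UNIV. \<forall>j\<in>Q. \<not> run_start n f j}"
  define q where "q = cyc_pred n i"
  have "q < n" and "q \<noteq> i"
    using assms(1,2) cyc_pred_less cyc_pred_neq by (auto simp: q_def)
  have pred_ne_i: "cyc_pred n j \<noteq> i" and pred_ne_q: "cyc_pred n j \<noteq> q" if "j \<in> Q" for j
  proof -
    have "j < n" and "j \<noteq> i" and "j \<noteq> cyc_succ n i"
      using that assms(3-5) by auto
    then show "cyc_pred n j \<noteq> i" and "cyc_pred n j \<noteq> q"
      using cyc_pred_ne[OF assms(2)] unfolding q_def by blast+
  qed
  have "finite X"
    by (simp add: X_def finite_PiE)
  have flip_closed: "f(i := \<not> f i) \<in> X" if "f \<in> X" for f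
  proof -
    have "run_start n (f(i := \<not> f i)) j = run_start n f j" if "j \<in> Q" for j
      using that assms(4) pred_ne_i[OF that] by (intro run_start_fun_upd) auto
    then show ?thesis
      using \<open>f \<in> X\<close> assms(2) by (auto simp: X_def PiE_iff extensional_def)
  qed
  have clear_closed: "f(q := False) \<in> X" if "f \<in> X" for f
  proof -
    have "\<not> run_start n (f(q := False)) j" if "j \<in> Q" for j
      using \<open>f \<in> X\<close> that run_start_fun_upd_False[OF pred_ne_q[OF that, symmetric]]
      by (auto simp: X_def)
    then show ?thesis
      using \<open>f \<in> X\<close> \<open>q < n\<close> by (auto simp: X_def PiE_iff extensional_def)
  qed
  have quarter: "card X \<le> 4 * card {f \<in> X. \<not> f q \<and> f i}"
    using \<open>finite X\<close> \<open>q \<noteq> i\<close> flip_closed clear_closed by (rule card_le_four_card_pattern)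
  have "{f \<in> {0..<n} \<rightarrow>\<^sub>E UNIV. \<forall>j\<in>insert i Q. \<not> run_start n f j} = X - {f \<in> X. \<not> f q \<and> f i}"
    by (auto simp: X_def run_start_def q_def)
  then have "card {f \<in> {0..<n} \<rightarrow>\<^sub>E UNIV. \<forall>j\<in>insert i Q. \<not> run_start n f j}
      = card X - card {f \<in> X. \<not> f q \<and> f i}"
    using \<open>finite X\<close> by (simp add: card_Diff_subset)
  moreover have "card {f \<in> X. \<not> f q \<and> f i} \<le> card X"
    using \<open>finite X\<close> by (intro card_mono) auto
  ultimately show ?thesis
    using quarter unfolding X_def[symmetric] by linarith
qed

lemma card_no_run_start_le:
  assumes "2 \<le> n" and "P \<subseteq> {0..<n}" and "card P < n"
  shows "4 ^ card P * card {f \<in> {0..<n} \<rightarrow>\<^sub>E UNIV. \<forall>i\<in>P. \<not> run_start n f i} \<le> 3 ^ card P * 2 ^ n"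
  using assms(2,3)
proof (induction "card P" arbitrary: P)
  case 0
  moreover have "finite P"
    using "0.prems"(1) finite_subset by blast
  ultimately have "P = {}"
    by simp
  then show ?case
    by (simp add: card_PiE)
next
  case (Suc m P)
  have "finite P"
    using Suc.prems(1) finite_subset by blast
  have "P \<noteq> {}"
    using Suc.hyps(2) by auto
  then obtain i where "i \<in> P" and "cyc_succ n i \<notin> P"
    using exists_cyc_succ_notin[OF Suc.prems(1) _ Suc.prems(2)] by blast
  define Q where "Q = P - {i}"
  have "i < n" and "Q \<subseteq> {0..<n}" and "i \<notin> Q" and "cyc_succ n i \<notin> Q" and "insert i Q = P"
    using \<open>i \<in> P\<close> \<open>cyc_succ n i \<notin> P\<close> Suc.prems(1) by (auto simp: Q_def)
  have "card Q = m"
    using Suc.hyps(2) \<open>finite P\<close> \<open>i \<in> P\<close> by (simp add: Q_def)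
  have step: "4 * card {f \<in> {0..<n} \<rightarrow>\<^sub>E UNIV. \<forall>j\<in>P. \<not> run_start n f j}
      \<le> 3 * card {f \<in> {0..<n} \<rightarrow>\<^sub>E UNIV. \<forall>j\<in>Q. \<not> run_start n f j}"
    using four_card_no_run_start_insert[OF assms(1) \<open>i < n\<close> \<open>Q \<subseteq> {0..<n}\<close> \<open>i \<notin> Q\<close>
        \<open>cyc_succ n i \<notin> Q\<close>]
    unfolding \<open>insert i Q = P\<close> .
  have IH: "4 ^ m * card {f \<in> {0..<n} \<rightarrow>\<^sub>E UNIV. \<forall>j\<in>Q. \<not> run_start n f j} \<le> 3 ^ m * 2 ^ n"
    using Suc.hyps(1)[of Q] \<open>card Q = m\<close> \<open>Q \<subseteq> {0..<n}\<close> Suc.prems(2) Suc.hyps(2) by simp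
  have "4 ^ card P * card {f \<in> {0..<n} \<rightarrow>\<^sub>E UNIV. \<forall>j\<in>P. \<not> run_start n f j}
      = 4 ^ m * (4 * card {f \<in> {0..<n} \<rightarrow>\<^sub>E UNIV. \<forall>j\<in>P. \<not> run_start n f j})"
    using Suc.hyps(2)[symmetric] by simp
  also have "\<dots> \<le> 3 * (4 ^ m * card {f \<in> {0..<n} \<rightarrow>\<^sub>E UNIV. \<forall>j\<in>Q. \<not> run_start n f j})"
    using step by simp
  also have "\<dots> \<le> 3 ^ card P * 2 ^ n"
    using IH Suc.hyps(2)[symmetric] by simp
  finally show ?case .
qed

lemma card_no_run_start_le_power:
  assumes "2 \<le> n" and "P \<subseteq> {0..<n}" and "card P < n"
  shows "card {f \<in> {0..<n} \<rightarrow>\<^sub>E UNIV. \<forall>i\<in>P. \<not> run_start n f i} \<le> (3 / 4) ^ card P * 2 ^ n"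
proof -
  have "real (4 ^ card P * card {f \<in> {0..<n} \<rightarrow>\<^sub>E UNIV. \<forall>i\<in>P. \<not> run_start n f i})
      \<le> real (3 ^ card P * 2 ^ n)"
    using card_no_run_start_le[OF assms] by (rule of_nat_mono)
  then show ?thesis
    by (simp add: power_divide field_simps)
qed

definition run_start_support :: "nat \<Rightarrow> nat set \<Rightarrow> nat set" where
  "run_start_support n P = P \<union> cyc_pred n ` P"

lemma mem_run_start_support:
  assumes "x \<in> run_start_support n Q" and "Q \<subseteq> {0..<n}"
  shows "x \<in> Q \<or> cyc_succ n x \<in> Q"
  using assms by (auto simp: run_start_support_def cyc_succ_cyc_pred subset_iff)

lemma card_run_start_support_le:
  "finite Q \<Longrightarrow> card (run_start_support n Q) \<le> 2 * card Q"
  unfolding run_start_support_def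
  using card_Un_le[of Q "cyc_pred n ` Q"] card_image_le[of Q "cyc_pred n"] by linarith

lemma determined_by_no_run_start:
  "determined_by (run_start_support n P) \<Omega> {f \<in> \<Omega>. \<forall>i\<in>P. \<not> run_start n f i}"
  by (auto simp: determined_by_def run_start_support_def run_start_def)

lemma exists_run_start_in_each:
  fixes P :: "'j \<Rightarrow> nat set" and D :: nat
  assumes "2 \<le> n" and "finite J" and "0 < m" and "m < n"
    and P: "\<And>j. j \<in> J \<Longrightarrow> P j \<subseteq> {0..<n} \<and> card (P j) = m"
    and dependency: "\<And>j. j \<in> J \<Longrightarrow>
      card {j' \<in> J. run_start_support n (P j') \<inter> run_start_support n (P j) \<noteq> {}} \<le> D"
    and small: "4 * D * 3 ^ m \<le> 4 ^ m"
  shows "\<exists>f. \<forall>j\<in>J. \<exists>i\<in>P j. run_start n f i"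
proof (cases "J = {}")
  case False
  define \<Omega> where "\<Omega> = {0..<n} \<rightarrow>\<^sub>E (UNIV :: bool set)"
  define A where "A j = {f \<in> \<Omega>. \<forall>i\<in>P j. \<not> run_start n f i}" for j
  define p :: real where "p = (3 / 4) ^ m"
  have card_A: "card (A j) \<le> p * card \<Omega>" if "j \<in> J" for j
    using card_no_run_start_le_power[OF assms(1), of "P j"] P[OF that] assms(4)
    by (simp add: A_def \<Omega>_def p_def card_PiE)
  have four_p_D: "4 * p * D \<le> 1"
    using of_nat_mono[OF small] by (simp add: p_def power_divide field_simps)
  obtain j where "j \<in> J"
    using False by blast
  \<comment> \<open>Each event depends on itself, so D \<ge> 1 and hence 2 p < 1.\<close>
  then have "j \<in> {j' \<in> J. run_start_support n (P j') \<inter> run_start_support n (P j) \<noteq> {}}"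
    using P[OF \<open>j \<in> J\<close>] assms(3) by (auto simp: run_start_support_def)
  then have "0 < card {j' \<in> J. run_start_support n (P j') \<inter> run_start_support n (P j) \<noteq> {}}"
    unfolding card_gt_0_iff using assms(2) by auto
  then have "1 \<le> D"
    using dependency[OF \<open>j \<in> J\<close>] by linarith
  moreover have "0 < p"
    by (simp add: p_def)
  ultimately have "4 * p \<le> 4 * p * D"
    by simp
  then have "2 * p < 1"
    using four_p_D \<open>0 < p\<close> by linarith
  have "\<exists>f\<in>\<Omega>. \<forall>j\<in>J. f \<notin> A j"
  proof (rule lovasz_local_lemma[where I = "{0..<n}" and X = "\<lambda>_. UNIV"
        and B = "\<lambda>j. run_start_support n (P j)"])
    show "\<Omega> = {0..<n} \<rightarrow>\<^sub>E UNIV" "finite \<Omega>" "\<Omega> \<noteq> {}"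
      by (simp_all add: \<Omega>_def finite_PiE PiE_eq_empty_iff)
    show "A j \<subseteq> \<Omega> \<and> determined_by (run_start_support n (P j)) \<Omega> (A j)" for j
      unfolding A_def using determined_by_no_run_start by blast
  qed (use assms(2) card_A dependency four_p_D \<open>0 < p\<close> \<open>2 * p < 1\<close> in auto)
  then show ?thesis
    unfolding A_def by blast
qed simp

lemma cycle_adj_commute: "cycle_adj C u v \<longleftrightarrow> cycle_adj C v u"
  unfolding cycle_adj_def by blast

lemma cycle_adj_nth:
  assumes "distinct C" and "i < length C" and "cycle_adj C (C ! i) w"
  shows "w = C ! cyc_succ (length C) i \<or> w = C ! cyc_pred (length C) i"
proof -
  let ?n = "length C"
  obtain j where "j < ?n" and j: "(C ! i = C ! j \<and> w = C ! cyc_succ ?n j) \<or> (w = C ! j \<and> C ! i = C ! cyc_succ ?n j)"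
    using assms(3) unfolding cycle_adj_def cyc_succ_def by blast
  have "cyc_succ ?n j < ?n"
    using \<open>j < ?n\<close> by (intro cyc_succ_less) auto
  then have "i = j \<and> w = C ! cyc_succ ?n j \<or> w = C ! j \<and> i = cyc_succ ?n j"
    using j assms(1,2) \<open>j < ?n\<close> by (auto simp: nth_eq_iff_index_eq)
  then show ?thesis
    using cyc_pred_cyc_succ[OF \<open>j < ?n\<close>] by auto
qed

lemma run_start_vertices_not_cycle_adj:
  assumes "distinct C"
    and "u \<in> (!) C ` {i. i < length C \<and> run_start (length C) f i}"
    and "w \<in> (!) C ` {i. i < length C \<and> run_start (length C) f i}"
  shows "\<not> cycle_adj C u w"
proof
  let ?n = "length C"
  obtain i j where i: "i < ?n" "run_start ?n f i" "u = C ! i" and j: "j < ?n" "run_start ?n f j" "w = C ! j"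
    using assms(2,3) by blast
  assume "cycle_adj C u w"
  then have "C ! j = C ! cyc_succ ?n i \<or> C ! j = C ! cyc_pred ?n i"
    using cycle_adj_nth[OF assms(1) i(1)] i(3) j(3) by simp
  moreover have "0 < ?n"
    using i(1) by linarith
  ultimately have "j = cyc_succ ?n i \<or> i = cyc_succ ?n j"
    using assms(1) i(1) j(1) cyc_succ_less[of ?n i] cyc_pred_less[of ?n i] cyc_succ_cyc_pred[OF i(1)]
    by (auto simp: nth_eq_iff_index_eq)
  then show False
    using i(1,2) j(1,2) not_run_start_cyc_succ by blast
qed

definition closed_chord_nbhd :: "'a set \<Rightarrow> ('a \<Rightarrow> 'a \<Rightarrow> bool) \<Rightarrow> 'a list \<Rightarrow> 'a \<Rightarrow> 'a set" where
  "closed_chord_nbhd V E C v = insert v {w \<in> V. E v w \<and> \<not> cycle_adj C v w}"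

lemma closed_chord_nbhd_subset: "closed_chord_nbhd V E C v \<subseteq> insert v (neighbours V E v)"
  by (auto simp: closed_chord_nbhd_def neighbours_def)

lemma mem_closed_chord_nbhd_commute:
  assumes "simple_graph V E" and "u \<in> V" and "w \<in> closed_chord_nbhd V E C u"
  shows "u \<in> closed_chord_nbhd V E C w"
  using assms cycle_adj_commute[of C u w] unfolding closed_chord_nbhd_def simple_graph_def by auto

lemma card_closed_chord_nbhd_le:
  assumes "simple_graph V E" and "regular V E k" and "v \<in> V"
  shows "card (closed_chord_nbhd V E C v) \<le> k + 1"
proof -
  have "finite (neighbours V E v)"
    using assms(1) by (simp add: simple_graph_def neighbours_def)
  then have "card (closed_chord_nbhd V E C v) \<le> card (insert v (neighbours V E v))"
    by (intro card_mono closed_chord_nbhd_subset) auto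
  also have "\<dots> \<le> k + 1"
    using assms(2,3) \<open>finite (neighbours V E v)\<close> by (simp add: regular_def card_insert_if)
  finally show ?thesis .
qed

lemma card_closed_chord_nbhd_ge:
  assumes "simple_graph V E" and "regular V E k" and "ham_cycle V E C" and "v \<in> V"
  shows "k - 1 \<le> card (closed_chord_nbhd V E C v)"
proof -
  let ?n = "length C"
  have "distinct C" and "set C = V"
    using assms(3) by (auto simp: ham_cycle_def)
  then obtain i where "i < ?n" and "C ! i = v"
    using assms(4) by (auto simp: in_set_conv_nth)
  define cycle_nbrs where "cycle_nbrs = {C ! cyc_succ ?n i, C ! cyc_pred ?n i}"
  have finite_V: "finite V" and irrefl: "\<not> E v v"
    using assms(1) by (auto simp: simple_graph_def)
  have "neighbours V E v - cycle_nbrs \<subseteq> {w \<in> V. E v w \<and> \<not> cycle_adj C v w}"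
    using cycle_adj_nth[OF \<open>distinct C\<close> \<open>i < ?n\<close>] \<open>C ! i = v\<close>
    by (auto simp: neighbours_def cycle_nbrs_def)
  then have "card (neighbours V E v - cycle_nbrs) \<le> card {w \<in> V. E v w \<and> \<not> cycle_adj C v w}"
    using finite_V by (intro card_mono) auto
  moreover have "k - 2 \<le> card (neighbours V E v - cycle_nbrs)"
  proof -
    have "card cycle_nbrs \<le> 2"
      unfolding cycle_nbrs_def by (simp add: card_insert_if)
    then show ?thesis
      using diff_card_le_card_Diff[of cycle_nbrs "neighbours V E v"] assms(2,4)
      by (simp add: cycle_nbrs_def regular_def)
  qed
  moreover have "card (closed_chord_nbhd V E C v) = card {w \<in> V. E v w \<and> \<not> cycle_adj C v w} + 1"
    using finite_V irrefl by (simp add: closed_chord_nbhd_def)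
  ultimately show ?thesis
    by linarith
qed

lemma regular_less_card:
  assumes "simple_graph V E" and "regular V E k" and "v \<in> V"
  shows "k < card V"
proof -
  have "finite V" and "neighbours V E v \<subseteq> V - {v}"
    using assms(1) by (auto simp: simple_graph_def neighbours_def)
  then have "card (neighbours V E v) \<le> card (V - {v})"
    by (intro card_mono) auto
  moreover have "0 < card V"
    using \<open>finite V\<close> assms(3) card_gt_0_iff by blast
  ultimately show ?thesis
    using assms(2,3) \<open>finite V\<close> by (simp add: regular_def card_Diff_singleton)
qed

lemma card_nth_preimage:
  assumes "distinct C" and "T \<subseteq> set C"
  shows "card {i. i < length C \<and> C ! i \<in> T} = card T"
proof -
  have "(!) C ` {i. i < length C \<and> C ! i \<in> T} = T"
  proof (intro equalityI subsetI)
    fix x assume "x \<in> T"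
    then obtain i where "i < length C" and "C ! i = x"
      using assms(2) by (metis in_set_conv_nth subsetD)
    then show "x \<in> (!) C ` {i. i < length C \<and> C ! i \<in> T}"
      using \<open>x \<in> T\<close> by auto
  qed auto
  moreover have "inj_on ((!) C) {i. i < length C \<and> C ! i \<in> T}"
    using assms(1) by (intro inj_on_nth) auto
  ultimately show ?thesis
    using card_image by fastforce
qed

lemma exists_chord_index_sets:
  assumes "simple_graph V E" and "regular V E k" and "ham_cycle V E C"
  obtains P where "\<And>v. v \<in> V \<Longrightarrow>
    P v \<subseteq> {0..<length C} \<and> card (P v) = k - 1 \<and> (\<forall>i\<in>P v. C ! i \<in> closed_chord_nbhd V E C v)"
proof -
  have "distinct C" and "set C = V"
    using assms(3) by (auto simp: ham_cycle_def)
  have "\<forall>v\<in>V. \<exists>Q. Q \<subseteq> {0..<length C} \<and> card Q = k - 1 \<and> (\<forall>i\<in>Q. C ! i \<in> closed_chord_nbhd V E C v)"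
  proof
    fix v assume "v \<in> V"
    obtain T where T: "T \<subseteq> closed_chord_nbhd V E C v" and "card T = k - 1"
      using card_closed_chord_nbhd_ge[OF assms \<open>v \<in> V\<close>] by (meson obtain_subset_with_card_n)
    define Q where "Q = {i. i < length C \<and> C ! i \<in> T}"
    have "T \<subseteq> set C"
      using T \<open>v \<in> V\<close> \<open>set C = V\<close> by (auto simp: closed_chord_nbhd_def)
    then have "card Q = k - 1"
      using card_nth_preimage[OF \<open>distinct C\<close>] \<open>card T = k - 1\<close> by (simp add: Q_def)
    then show "\<exists>Q. Q \<subseteq> {0..<length C} \<and> card Q = k - 1 \<and> (\<forall>i\<in>Q. C ! i \<in> closed_chord_nbhd V E C v)"
      using T by (intro exI[of _ Q]) (auto simp: Q_def)
  qed
  then have "\<exists>P. \<forall>v\<in>V. P v \<subseteq> {0..<length C} \<and> card (P v) = k - 1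
      \<and> (\<forall>i\<in>P v. C ! i \<in> closed_chord_nbhd V E C v)"
    by (rule bchoice)
  then show ?thesis
    using that by blast
qed

lemma mem_closed_chord_nbhd_of_support:
  assumes "simple_graph V E" and "u \<in> V" and "Q \<subseteq> {0..<length C}"
    and "\<forall>i\<in>Q. C ! i \<in> closed_chord_nbhd V E C u" and "x \<in> run_start_support (length C) Q"
  shows "u \<in> closed_chord_nbhd V E C (C ! x) \<union> closed_chord_nbhd V E C (C ! cyc_succ (length C) x)"
proof -
  have "x \<in> Q \<or> cyc_succ (length C) x \<in> Q"
    using mem_run_start_support[OF assms(5,3)] .
  then have "C ! x \<in> closed_chord_nbhd V E C u \<or> C ! cyc_succ (length C) x \<in> closed_chord_nbhd V E C u"
    using assms(4) by blast
  then show ?thesis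
    using mem_closed_chord_nbhd_commute[OF assms(1,2)] by blast
qed

lemma card_UN_le_card_mult:
  assumes "finite I" and "\<And>x. x \<in> I \<Longrightarrow> card (U x) \<le> c"
  shows "card (\<Union>x\<in>I. U x) \<le> card I * c"
  using card_UN_le[OF assms(1), of U] sum_bounded_above[of I "\<lambda>x. card (U x)" c] assms(2) by simp

lemma card_overlapping_supports_le:
  assumes "simple_graph V E" and "regular V E k" and "ham_cycle V E C"
    and P: "\<And>v. v \<in> V \<Longrightarrow>
      P v \<subseteq> {0..<length C} \<and> card (P v) = k - 1 \<and> (\<forall>i\<in>P v. C ! i \<in> closed_chord_nbhd V E C v)"
    and "v \<in> V"
  shows "card {u \<in> V. run_start_support (length C) (P u) \<inter> run_start_support (length C) (P v) \<noteq> {}}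
           \<le> 4 * (k + 1)\<^sup>2"
proof -
  let ?n = "length C" and ?N = "closed_chord_nbhd V E C"
  have "set C = V" and "0 < ?n"
    using assms(3) by (auto simp: ham_cycle_def)
  have nth_V: "C ! x \<in> V" if "x < ?n" for x
    using that \<open>set C = V\<close> by auto
  have support_subset: "run_start_support ?n (P v) \<subseteq> {0..<?n}"
    using P[OF assms(5)] cyc_pred_less[OF \<open>0 < ?n\<close>] by (auto simp: run_start_support_def)
  then have finite_support: "finite (run_start_support ?n (P v))"
    using finite_subset by blast
  define U where "U x = ?N (C ! x) \<union> ?N (C ! cyc_succ ?n x)" for x
  have "{u \<in> V. run_start_support ?n (P u) \<inter> run_start_support ?n (P v) \<noteq> {}}
      \<subseteq> (\<Union>x\<in>run_start_support ?n (P v). U x)"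
    using mem_closed_chord_nbhd_of_support[OF assms(1) _ conjunct1[OF P] conjunct2[OF conjunct2[OF P]]]
    unfolding U_def by blast
  moreover have "finite (\<Union>x\<in>run_start_support ?n (P v). U x)"
    using finite_support assms(1) by (simp add: U_def closed_chord_nbhd_def simple_graph_def)
  ultimately have "card {u \<in> V. run_start_support ?n (P u) \<inter> run_start_support ?n (P v) \<noteq> {}}
      \<le> card (\<Union>x\<in>run_start_support ?n (P v). U x)"
    by (rule card_mono[rotated])
  also have "\<dots> \<le> card (run_start_support ?n (P v)) * (2 * (k + 1))"
  proof (rule card_UN_le_card_mult[OF finite_support])
    fix x assume "x \<in> run_start_support ?n (P v)"
    then have "x < ?n" and "cyc_succ ?n x < ?n"
      using support_subset cyc_succ_less[OF \<open>0 < ?n\<close>] by auto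
    have "card (U x) \<le> card (?N (C ! x)) + card (?N (C ! cyc_succ ?n x))"
      unfolding U_def by (rule card_Un_le)
    also have "\<dots> \<le> (k + 1) + (k + 1)"
      using \<open>x < ?n\<close> \<open>cyc_succ ?n x < ?n\<close>
      by (intro add_mono card_closed_chord_nbhd_le[OF assms(1,2)] nth_V)
    finally show "card (U x) \<le> 2 * (k + 1)"
      by simp
  qed
  also have "\<dots> \<le> (2 * (k + 1)) * (2 * (k + 1))"
  proof (rule mult_right_mono)
    have "finite (P v)"
      using P[OF assms(5)] finite_subset by blast
    then show "card (run_start_support ?n (P v)) \<le> 2 * (k + 1)"
      using card_run_start_support_le[of "P v" ?n] P[OF assms(5)] by simp
  qed simp
  also have "\<dots> = 4 * (k + 1)\<^sup>2"
    by (simp add: power2_eq_square)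
  finally show ?thesis .
qed

lemma sixteen_sq_mult_power_3_le_power_4:
  "43 \<le> k \<Longrightarrow> 16 * (k + 1)\<^sup>2 * 3 ^ (k - 1) \<le> (4::nat) ^ (k - 1)"
proof (induction k rule: nat_induct_at_least)
  case (Suc k)
  have "43 * k \<le> k * k"
    using Suc.hyps by simp
  then have "8 + 4 * k \<le> k * k"
    using Suc.hyps by linarith
  then have "3 * (k + 2)\<^sup>2 \<le> 4 * (k + 1)\<^sup>2"
    by (simp add: power2_eq_square algebra_simps)
  then have "16 * (Suc k + 1)\<^sup>2 * 3 ^ (Suc k - 1) \<le> 16 * (4 * (k + 1)\<^sup>2) * 3 ^ (k - 1)"
    using Suc.hyps by (cases k) (auto simp: algebra_simps)
  also have "\<dots> = 4 * (16 * (k + 1)\<^sup>2 * 3 ^ (k - 1))"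
    by simp
  also have "\<dots> \<le> 4 * 4 ^ (k - 1)"
    using Suc.IH by simp
  also have "\<dots> = 4 ^ (Suc k - 1)"
    using Suc.hyps by (cases k) auto
  finally show ?case .
qed simp

lemma exists_colouring_with_run_start_near_every_vertex:
  assumes "simple_graph V E" and "regular V E k" and "k \<ge> 43" and "ham_cycle V E C"
  obtains f where "\<And>v. v \<in> V \<Longrightarrow>
    \<exists>i < length C. run_start (length C) f i \<and> C ! i \<in> closed_chord_nbhd V E C v"
proof -
  let ?n = "length C"
  have "distinct C" and "set C = V" and "3 \<le> ?n"
    using assms(4) by (auto simp: ham_cycle_def)
  obtain P where P: "\<And>v. v \<in> V \<Longrightarrow>
      P v \<subseteq> {0..<?n} \<and> card (P v) = k - 1 \<and> (\<forall>i\<in>P v. C ! i \<in> closed_chord_nbhd V E C v)"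
    using exists_chord_index_sets[OF assms(1,2,4)] by blast
  have "0 < ?n"
    using \<open>3 \<le> ?n\<close> by linarith
  then have "C ! 0 \<in> V"
    using nth_mem \<open>set C = V\<close> by blast
  then have "k < ?n"
    using regular_less_card[OF assms(1,2)] \<open>set C = V\<close> distinct_card[OF \<open>distinct C\<close>] by simp
  have "\<exists>f. \<forall>v\<in>V. \<exists>i\<in>P v. run_start ?n f i"
  proof (rule exists_run_start_in_each)
    show "2 \<le> ?n" and "0 < k - 1" and "k - 1 < ?n"
      using \<open>3 \<le> ?n\<close> \<open>k < ?n\<close> assms(3) by linarith+
    show "finite V"
      using assms(1) by (simp add: simple_graph_def)
    show "P v \<subseteq> {0..<?n} \<and> card (P v) = k - 1" if "v \<in> V" for v
      using P[OF that] by blast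
    show "card {u \<in> V. run_start_support ?n (P u) \<inter> run_start_support ?n (P v) \<noteq> {}}
        \<le> 4 * (k + 1)\<^sup>2" if "v \<in> V" for v
      using card_overlapping_supports_le[OF assms(1,2,4) P that] .
    show "4 * (4 * (k + 1)\<^sup>2) * 3 ^ (k - 1) \<le> 4 ^ (k - 1)"
      using sixteen_sq_mult_power_3_le_power_4[OF assms(3)] by simp
  qed
  then obtain f where f: "\<forall>v\<in>V. \<exists>i\<in>P v. run_start ?n f i"
    by blast
  show ?thesis
  proof (rule that)
    fix v assume "v \<in> V"
    then obtain i where "i \<in> P v" and "run_start ?n f i"
      using f by blast
    then show "\<exists>i < ?n. run_start ?n f i \<and> C ! i \<in> closed_chord_nbhd V E C v"
      using P[OF \<open>v \<in> V\<close>] by (intro exI[of _ i]) auto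
  qed
qed

theorem theorem4p3:
  fixes V :: "'a set" and E :: "'a \<Rightarrow> 'a \<Rightarrow> bool" and k :: nat and C :: "'a list"
  assumes "simple_graph V E" and "regular V E k" and "k \<ge> 43" and "ham_cycle V E C"
  shows "\<exists>S \<subseteq> V. (\<forall>u\<in>S. \<forall>v\<in>S. \<not> cycle_adj C u v) \<and>
           (\<forall>v\<in>V. v \<in> S \<or> (\<exists>w\<in>S. E v w \<and> \<not> cycle_adj C v w))"
proof -
  have "distinct C" and "set C = V"
    using assms(4) by (auto simp: ham_cycle_def)
  obtain f where f: "\<And>v. v \<in> V \<Longrightarrow>
      \<exists>i < length C. run_start (length C) f i \<and> C ! i \<in> closed_chord_nbhd V E C v"
    using exists_colouring_with_run_start_near_every_vertex[OF assms] by blast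
  define S where "S = (!) C ` {i. i < length C \<and> run_start (length C) f i}"
  have "S \<subseteq> V"
    using \<open>set C = V\<close> unfolding S_def by auto
  moreover have "\<forall>u\<in>S. \<forall>w\<in>S. \<not> cycle_adj C u w"
    using run_start_vertices_not_cycle_adj[OF \<open>distinct C\<close>] unfolding S_def by blast
  moreover have "v \<in> S \<or> (\<exists>w\<in>S. E v w \<and> \<not> cycle_adj C v w)" if "v \<in> V" for v
  proof -
    obtain i where "i < length C" and "run_start (length C) f i" and "C ! i \<in> closed_chord_nbhd V E C v"
      using f[OF \<open>v \<in> V\<close>] by blast
    then have "C ! i \<in> S"
      unfolding S_def by (intro imageI) simp
    then show ?thesis
      using \<open>C ! i \<in> closed_chord_nbhd V E C v\<close> unfolding closed_chord_nbhd_def by blast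
  qed
  ultimately show ?thesis
    by (intro exI[of _ S] conjI ballI) auto
qed

end
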